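(* Let $N\ge1$, $\mathcal C=(-\tfrac14,\tfrac14)^N$, and for $S\subset[\![N]\!]$ define $K_S:\mathcal C\to\mathbb R$ by $K_S(b)=\frac{N+4-2|S|}{16}+\sum_{i\in S}b_i^2-\sum_{i\notin S}b_i^2$, and $V_S=\{b\in\mathcal C:K_S(b)=0\}$. Let $\alpha,\alpha':\mathcal P([\![N]\!])\to\{-1,0,1\}$ be functions, put $M_\alpha=\{b\in\mathcal C:\operatorname{sgn}K_S(b)=\alpha(S)\text{ for all }S\}$ and $V(\alpha)=\bigcap_{\alpha(S)=0}V_S$ (with $V(\alpha)=\mathcal C$ if $\alpha^{-1}(0)=\emptyset$), and define $\dim M_\alpha:=\dim V(\alpha)$. Suppose $M_\alpha$ and $M_{\alpha'}$ are nonempty and a sequence in $M_\alpha$ converges to a point of $M_{\alpha'}$. Then either $\alpha=\alpha'$ or $\dim M_{\alpha'}<\dim M_\alpha$.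
   Context: $[\![N]\!]=\{1,\dots,N\}$, $\mathcal P([\![N]\!])$ its power set, and $\dim$ denotes the dimension of a real algebraic set (these $V(\alpha)$ are solution sets of linear equations in the variables $b_i^2$). Note $S\subsetneq S'$ implies $K_{S'}<K_S$ on $\mathcal C$. *)

theory Defs
  imports "HOL-Analysis.Analysis"
begin

text \<open>The index set [[N]] is a finite type 'n with N = CARD('n) (so N >= 1 automatically);
  points of R^N are vectors of type real^'n.\<close>

definition cube :: "(real^'n::finite) set" where
  "cube = {b. \<forall>i. \<bar>b$i\<bar> < 1/4}"

definition K :: "'n::finite set \<Rightarrow> real^'n \<Rightarrow> real" where
  "K S b = (real CARD('n) + 4 - 2 * real (card S)) / 16
           + (\<Sum>i\<in>S. (b$i)^2) - (\<Sum>i\<in>-S. (b$i)^2)"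

definition Vset :: "'n::finite set \<Rightarrow> (real^'n) set" where
  "Vset S = {b \<in> cube. K S b = 0}"

definition Mset :: "('n::finite set \<Rightarrow> int) \<Rightarrow> (real^'n) set" where
  "Mset \<alpha> = {b \<in> cube. \<forall>S. sgn (K S b) = of_int (\<alpha> S)}"

definition Valpha :: "('n::finite set \<Rightarrow> int) \<Rightarrow> (real^'n) set" where
  "Valpha \<alpha> = cube \<inter> (\<Inter>S\<in>{S. \<alpha> S = 0}. Vset S)"

text \<open>Dimension of a (semi)algebraic subset A of R^N: the largest d such that A contains
  a continuous injective image of a nonempty open subset of a d-dimensional linear subspace
  (equivalently, by invariance of domain, of an open subset of R^d).  For real
  (semi)algebraic sets this agrees with the algebraic (Krull) dimension.\<close>
definition sa_dim :: "(real^'n::finite) set \<Rightarrow> nat" where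
  "sa_dim A = (GREATEST d. \<exists>(T::(real^'n) set) U (f::real^'n \<Rightarrow> real^'n). subspace T \<and> dim T = d \<and> openin (top_of_set T) U
      \<and> U \<noteq> {} \<and> continuous_on U f \<and> inj_on f U \<and> f ` U \<subseteq> A)"

definition dimM :: "('n::finite set \<Rightarrow> int) \<Rightarrow> nat" where
  "dimM \<alpha> = sa_dim (Valpha \<alpha>)"

end

theory Submission
  imports Defs
begin

(* Squaring the coordinates, b \<mapsto> (b_i^2)_i, turns every K_S into an affine function, so V(alpha)
   is the preimage of the convex polytope P(alpha) = {c \<in> [0,1/16)^N. K_S(c) = 0 whenever
   alpha(S) = 0}, and dim V(alpha) = aff_dim P(alpha).  Coordinatewise square roots embed P(alpha)
   into V(alpha); conversely, near a point of maximal support of a chart the signs of the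
   coordinates are locally constant, so squaring is injective there and invariance of domain
   bounds the dimension of the chart.
   Along a sequence in M_alpha the sign of each K_S can only drop to 0 in the limit, so if
   alpha' \<noteq> alpha there is an S with alpha'(S) = 0 \<noteq> alpha(S).  Then P(alpha') lies in the
   hyperplane K_S = 0 of P(alpha), which misses the squares of any point of M_alpha. *)

definition sq_coords :: "real^'n::finite \<Rightarrow> real^'n" where
  "sq_coords b = (\<chi> i. (b$i)^2)"

definition sqrt_coords :: "real^'n::finite \<Rightarrow> real^'n" where
  "sqrt_coords c = (\<chi> i. sqrt (c$i))"

definition K_of_squares :: "'n::finite set \<Rightarrow> real^'n \<Rightarrow> real" where
  "K_of_squares S c = (real CARD('n) + 4 - 2 * real (card S)) / 16
     + (\<Sum>i\<in>S. c$i) - (\<Sum>i\<in>-S. c$i)"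

definition square_polytope :: "('n::finite set \<Rightarrow> int) \<Rightarrow> (real^'n) set" where
  "square_polytope \<alpha> =
     {c. (\<forall>i. 0 \<le> c$i \<and> c$i < 1/16) \<and> (\<forall>S. \<alpha> S = 0 \<longrightarrow> K_of_squares S c = 0)}"

lemma K_eq_K_of_squares: "K S b = K_of_squares S (sq_coords b)"
  by (simp add: K_def K_of_squares_def sq_coords_def)

lemma K_of_squares_convex_comb:
  fixes c d :: "real^'n::finite"
  assumes "u + v = 1"
  shows "K_of_squares S (u *\<^sub>R c + v *\<^sub>R d) = u * K_of_squares S c + v * K_of_squares S d"
proof -
  define a where "a = (real CARD('n) + 4 - 2 * real (card S)) / 16"
  have "a = u * a + v * a" using assms by (metis distrib_right mult_1)
  then show ?thesis
    by (simp add: K_of_squares_def flip: a_def)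
       (simp add: sum.distrib algebra_simps flip: sum_distrib_left)
qed

lemma mem_cube_iff_sq_coords: "b \<in> cube \<longleftrightarrow> (\<forall>i. (b$i)^2 < 1/16)"
proof -
  have "\<bar>x\<bar> < 1/4 \<longleftrightarrow> x^2 < (1/4)^2" for x :: real
    using abs_le_square_iff[of "1/4" x] by auto
  then show ?thesis by (simp add: cube_def power_divide)
qed

lemma Valpha_iff_sq_coords: "b \<in> Valpha \<alpha> \<longleftrightarrow> sq_coords b \<in> square_polytope \<alpha>"
  by (auto simp: Valpha_def Vset_def square_polytope_def mem_cube_iff_sq_coords
      K_eq_K_of_squares sq_coords_def)

lemma Mset_subset_Valpha: "Mset \<alpha> \<subseteq> Valpha \<alpha>"
  by (auto simp: Mset_def Valpha_def Vset_def) (metis of_int_0 sgn_eq_0_iff)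

lemma convex_square_polytope: "convex (square_polytope \<alpha>)"
  unfolding convex_def square_polytope_def
proof (intro ballI allI impI, goal_cases)
  case (1 x y u v)
  then have bounds: "0 \<le> x$i" "x$i < 1/16" "0 \<le> y$i" "y$i < 1/16" for i
    by auto
  have "u * x$i + v * y$i < 1/16" for i
    using convex_bound_lt[OF bounds(2,4)] 1 by blast
  moreover have "0 \<le> u * x$i + v * y$i" for i
    using bounds 1 by simp
  ultimately show ?case using 1 by (auto simp: K_of_squares_convex_comb)
qed

lemma affine_K_of_squares_zero: "affine {c. K_of_squares S c = 0}"
  unfolding affine_def by (auto simp: K_of_squares_convex_comb)

lemma sq_coords_sqrt_coords: "(\<And>i. 0 \<le> c$i) \<Longrightarrow> sq_coords (sqrt_coords c) = c"
  by (simp add: sq_coords_def sqrt_coords_def vec_eq_iff)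

lemma inj_on_sq_coords_if_sgn_eq:
  assumes "\<And>x i. x \<in> A \<Longrightarrow> sgn (x$i) = sgn (a$i)"
  shows "inj_on sq_coords A"
proof (rule inj_onI)
  fix x y assume x: "x \<in> A" and y: "y \<in> A" and eq: "sq_coords x = sq_coords y"
  have "x$i = y$i" for i
  proof -
    have "\<bar>x$i\<bar> = \<bar>y$i\<bar>"
      using eq by (metis real_sqrt_abs sq_coords_def vec_lambda_beta)
    moreover have "sgn (x$i) = sgn (y$i)" using assms x y by metis
    ultimately show ?thesis by (metis abs_mult_sgn)
  qed
  then show "x = y" by (simp add: vec_eq_iff)
qed

lemma sgn_eq_near_max_support:
  fixes f :: "'a::metric_space \<Rightarrow> real^'n::finite"
  assumes cont: "continuous_on U f" and u0: "u0 \<in> U"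
    and max: "\<And>u. u \<in> U \<Longrightarrow> card {i. f u $ i \<noteq> 0} \<le> card {i. f u0 $ i \<noteq> 0}"
  obtains e where "e > 0"
    "\<And>u i. u \<in> U \<Longrightarrow> dist u u0 < e \<Longrightarrow> sgn (f u $ i) = sgn (f u0 $ i)"
proof -
  define J where "J = {i. f u0 $ i \<noteq> 0}"
  have "\<forall>\<^sub>F u in at u0 within U. \<forall>i\<in>J. 0 < f u $ i * f u0 $ i"
  proof (rule eventually_ball_finite, simp, intro ballI)
    fix i assume "i \<in> J"
    have "((\<lambda>u. f u $ i * f u0 $ i) \<longlongrightarrow> f u0 $ i * f u0 $ i) (at u0 within U)"
      using cont u0 unfolding continuous_on_def by (intro tendsto_intros) blast
    moreover have "0 < f u0 $ i * f u0 $ i"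
      using \<open>i \<in> J\<close> by (auto simp: J_def zero_less_mult_iff)
    ultimately show "\<forall>\<^sub>F u in at u0 within U. 0 < f u $ i * f u0 $ i"
      by (rule order_tendstoD)
  qed
  then obtain e where "e > 0"
    and e: "\<And>u. u \<in> U \<Longrightarrow> u \<noteq> u0 \<Longrightarrow> dist u u0 < e \<Longrightarrow> \<forall>i\<in>J. 0 < f u $ i * f u0 $ i"
    unfolding eventually_at by blast
  have "sgn (f u $ i) = sgn (f u0 $ i)" if u: "u \<in> U" "dist u u0 < e" for u i
  proof (cases "u = u0")
    case False
    then have pos: "\<forall>i\<in>J. 0 < f u $ i * f u0 $ i" using e u by blast
    then have "J \<subseteq> {i. f u $ i \<noteq> 0}" by auto
    then have "{i. f u $ i \<noteq> 0} = J"
      using max[OF u(1)] card_mono[of "{i. f u $ i \<noteq> 0}" J]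
      by (intro card_subset_eq[symmetric]) (auto simp: J_def)
    then show ?thesis using pos by (cases "i \<in> J") (auto simp: J_def zero_less_mult_iff)
  qed simp
  with \<open>e > 0\<close> show thesis by (rule that)
qed

definition sa_dim_witness :: "(real^'n::finite) set \<Rightarrow> nat \<Rightarrow> bool" where
  "sa_dim_witness A d \<longleftrightarrow> (\<exists>(T::(real^'n) set) U (f::real^'n \<Rightarrow> real^'n).
      subspace T \<and> dim T = d \<and> openin (top_of_set T) U
      \<and> U \<noteq> {} \<and> continuous_on U f \<and> inj_on f U \<and> f ` U \<subseteq> A)"

lemma sa_dim_eq_Greatest: "sa_dim A = Greatest (sa_dim_witness A)"
  unfolding sa_dim_def sa_dim_witness_def ..

lemma sa_dim_witness_le_CARD: "sa_dim_witness A d \<Longrightarrow> d \<le> CARD('n)"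
  for A :: "(real^'n::finite) set"
  unfolding sa_dim_witness_def using dim_subset_UNIV_cart by blast

lemma sa_dim_witness_0:
  assumes "a \<in> A" shows "sa_dim_witness A 0"
  unfolding sa_dim_witness_def
  by (intro exI[of _ "{0}"] exI[of _ "\<lambda>_. a"]) (use assms in \<open>auto simp: subspace_0\<close>)

lemma sa_dim_witness_sa_dim: "A \<noteq> {} \<Longrightarrow> sa_dim_witness A (sa_dim A)"
  unfolding sa_dim_eq_Greatest
  by (metis GreatestI_nat equals0I sa_dim_witness_0 sa_dim_witness_le_CARD)

lemma le_sa_dim: "sa_dim_witness A d \<Longrightarrow> d \<le> sa_dim A"
  unfolding sa_dim_eq_Greatest by (metis Greatest_le_nat sa_dim_witness_le_CARD)

lemma dim_le_aff_dim_if_sq_coords_into: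
  fixes T U C :: "(real^'n::finite) set" and f :: "real^'n \<Rightarrow> real^'n"
  assumes T: "subspace T" and U: "openin (top_of_set T) U" "U \<noteq> {}"
    and cont: "continuous_on U f" and inj: "inj_on f U" and into: "sq_coords ` f ` U \<subseteq> C"
  shows "int (dim T) \<le> aff_dim C"
proof -
  obtain u0 where u0: "u0 \<in> U"
    and max: "\<And>u. u \<in> U \<Longrightarrow> card {i. f u $ i \<noteq> 0} \<le> card {i. f u0 $ i \<noteq> 0}"
  proof -
    obtain u1 where "u1 \<in> U" using U(2) by blast
    moreover have "card {i. f u $ i \<noteq> 0} < CARD('n) + 1" for u
      using card_mono[of UNIV "{i. f u $ i \<noteq> 0}"] by simp
    ultimately show thesis
      using that ex_has_greatest_nat[of "\<lambda>u. u \<in> U" u1 "\<lambda>u. card {i. f u $ i \<noteq> 0}"] by blast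
  qed
  obtain e where "e > 0"
    and sgn_eq: "\<And>u i. u \<in> U \<Longrightarrow> dist u u0 < e \<Longrightarrow> sgn (f u $ i) = sgn (f u0 $ i)"
    using sgn_eq_near_max_support[OF cont u0 max] by blast
  obtain r where "r > 0" and r: "ball u0 r \<inter> T \<subseteq> U"
    using U(1) u0 unfolding openin_contains_ball by blast
  define V where "V = T \<inter> ball u0 (min e r)"
  have VU: "V \<subseteq> U" using r unfolding V_def by auto
  have inj_V: "inj_on (sq_coords \<circ> f) V"
  proof (rule comp_inj_on)
    show "inj_on f V" using inj VU by (rule inj_on_subset)
    show "inj_on sq_coords (f ` V)"
      using sgn_eq VU by (intro inj_on_sq_coords_if_sgn_eq) (auto simp: V_def dist_commute)
  qed
  have cont_V: "continuous_on V (sq_coords \<circ> f)"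
    unfolding o_def sq_coords_def by (intro continuous_intros continuous_on_subset[OF cont VU])
  have into_V: "sq_coords \<circ> f \<in> V \<rightarrow> affine hull C"
    using VU into hull_subset by fastforce
  have "convex V" unfolding V_def by (intro convex_Int subspace_imp_convex T convex_ball)
  then have "aff_dim V \<le> aff_dim C"
    using cont_V into_V inj_V by (rule invariance_of_dimension_convex_domain)
  moreover have "u0 \<in> T" using U(1) u0 openin_imp_subset by blast
  then have "aff_dim V = aff_dim T"
    unfolding V_def using \<open>e > 0\<close> \<open>r > 0\<close>
    by (intro aff_dim_convex_Int_open subspace_imp_convex T open_ball) auto
  ultimately show ?thesis using aff_dim_subspace[OF T] by simp
qed

lemma aff_dim_le_sa_dim:
  fixes A C :: "(real^'n::finite) set" and g :: "real^'n \<Rightarrow> real^'n"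
  assumes "convex C" "C \<noteq> {}" and cont: "continuous_on C g" and inj: "inj_on g C"
    and into: "g ` C \<subseteq> A"
  shows "aff_dim C \<le> int (sa_dim A)"
proof -
  obtain c0 where c0: "c0 \<in> rel_interior C"
    using rel_interior_eq_empty[OF assms(1)] assms(2) by auto
  then obtain e where "e > 0" and e: "ball c0 e \<inter> affine hull C \<subseteq> C"
    unfolding mem_rel_interior_ball by blast
  have "c0 \<in> affine hull C" by (rule hull_inc[OF subsetD[OF rel_interior_subset c0]])
  define T where "T = (\<lambda>x. x - c0) ` (affine hull C)"
  have T: "subspace T"
    unfolding T_def
    by (rule affine_diffs_subspace_subtract[OF affine_affine_hull \<open>c0 \<in> affine hull C\<close>])
  have dim_T: "int (dim T) = aff_dim C"
    using aff_dim_subspace[OF T] aff_dim_translation_eq_subtract[of c0 "affine hull C"]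
    unfolding T_def by simp
  define U where "U = T \<inter> ball 0 e"
  have shift_U: "(\<lambda>u. u + c0) ` U \<subseteq> C"
    using e by (auto simp: U_def T_def dist_norm norm_minus_commute)
  have "sa_dim_witness A (dim T)"
    unfolding sa_dim_witness_def
  proof (intro exI conjI)
    show "openin (top_of_set T) U" unfolding U_def by (rule openin_open_Int[OF open_ball])
    show "U \<noteq> {}" unfolding U_def using subspace_0[OF T] \<open>e > 0\<close> by auto
    show "continuous_on U (\<lambda>u. g (u + c0))"
      by (rule continuous_on_compose2[OF cont _ shift_U]) (intro continuous_intros)
    have "inj_on (\<lambda>u. u + c0) U" by (simp add: inj_on_def)
    then show "inj_on (\<lambda>u. g (u + c0)) U"
      using comp_inj_on[OF _ inj_on_subset[OF inj shift_U]] by (simp add: o_def)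
    show "(\<lambda>u. g (u + c0)) ` U \<subseteq> A" using shift_U into by auto
  qed (fact T, rule refl)
  then have "dim T \<le> sa_dim A" by (rule le_sa_dim)
  with dim_T show ?thesis by linarith
qed

lemma dimM_eq_aff_dim_square_polytope:
  fixes \<alpha> :: "'n::finite set \<Rightarrow> int"
  assumes "Valpha \<alpha> \<noteq> {}"
  shows "int (dimM \<alpha>) = aff_dim (square_polytope \<alpha>)"
proof (rule antisym)
  obtain T U and f :: "real^'n \<Rightarrow> real^'n" where
    T: "subspace T" "dim T = dimM \<alpha>" and U: "openin (top_of_set T) U" "U \<noteq> {}"
    and f: "continuous_on U f" "inj_on f U" "f ` U \<subseteq> Valpha \<alpha>"
    using sa_dim_witness_sa_dim[OF assms] unfolding dimM_def sa_dim_witness_def by blast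
  have "sq_coords ` f ` U \<subseteq> square_polytope \<alpha>"
    using f(3) Valpha_iff_sq_coords by blast
  from dim_le_aff_dim_if_sq_coords_into[OF T(1) U f(1,2) this]
  show "int (dimM \<alpha>) \<le> aff_dim (square_polytope \<alpha>)" using T(2) by simp
next
  have "sqrt_coords ` square_polytope \<alpha> \<subseteq> Valpha \<alpha>"
    by (auto simp: Valpha_iff_sq_coords sq_coords_sqrt_coords square_polytope_def)
  moreover have "square_polytope \<alpha> \<noteq> {}"
    using assms Valpha_iff_sq_coords by blast
  moreover have "inj_on sqrt_coords (square_polytope \<alpha>)"
    by (auto intro!: inj_onI simp: sqrt_coords_def vec_eq_iff)
  moreover have "continuous_on (square_polytope \<alpha>) sqrt_coords"
    unfolding sqrt_coords_def by (intro continuous_intros)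
  ultimately show "aff_dim (square_polytope \<alpha>) \<le> int (dimM \<alpha>)"
    unfolding dimM_def using convex_square_polytope by (intro aff_dim_le_sa_dim) auto
qed

lemma sgn_limit_eq_or_zero:
  fixes f :: "nat \<Rightarrow> real"
  assumes "\<And>k. sgn (f k) = s" and "f \<longlonglongrightarrow> l"
  shows "sgn l = s \<or> l = 0"
proof (rule disjCI)
  assume "l \<noteq> 0"
  with assms(2) have "(\<lambda>k. sgn (f k)) \<longlonglongrightarrow> sgn l" by (rule tendsto_sgn)
  with assms(1) show "sgn l = s" by (simp add: LIMSEQ_const_iff)
qed

lemma aff_dim_less_if_subset_affine:
  fixes C C' H :: "'a::euclidean_space set"
  assumes "C' \<subseteq> C \<inter> H" "affine H" "c \<in> C" "c \<notin> H"
  shows "aff_dim C' < aff_dim C"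
proof (rule aff_dim_psubset)
  have "affine hull C' \<subseteq> affine hull C \<inter> H"
  proof (rule hull_minimal)
    show "C' \<subseteq> affine hull C \<inter> H" using assms(1) hull_subset[of C affine] by blast
    show "affine (affine hull C \<inter> H)" using assms(2) by (simp add: affine_Int)
  qed
  moreover have "c \<in> affine hull C" by (rule hull_inc[OF assms(3)])
  ultimately show "affine hull C' \<subset> affine hull C" using assms(4) by blast
qed

lemma Mset_limit_zero_or_same:
  assumes "\<And>k. x k \<in> Mset \<alpha>" "x \<longlonglongrightarrow> p" "p \<in> Mset \<alpha>'"
  shows "\<alpha>' S = 0 \<or> \<alpha>' S = \<alpha> S"
proof -
  have "(\<lambda>k. K S (x k)) \<longlonglongrightarrow> K S p"
    unfolding K_def by (intro tendsto_intros assms(2))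
  then have "sgn (K S p) = of_int (\<alpha> S) \<or> K S p = 0"
    using assms(1) by (intro sgn_limit_eq_or_zero) (auto simp: Mset_def)
  moreover have "sgn (K S p) = of_int (\<alpha>' S)" using assms(3) by (simp add: Mset_def)
  ultimately show ?thesis by auto
qed

lemma aff_dim_square_polytope_less:
  assumes zero_or_same: "\<And>S. \<alpha>' S = 0 \<or> \<alpha>' S = \<alpha> S"
    and b: "b \<in> Mset \<alpha>" and "\<alpha> \<noteq> \<alpha>'"
  shows "aff_dim (square_polytope \<alpha>') < aff_dim (square_polytope \<alpha>)"
proof -
  obtain S0 where "\<alpha> S0 \<noteq> \<alpha>' S0" using \<open>\<alpha> \<noteq> \<alpha>'\<close> by (meson ext)
  with zero_or_same have "\<alpha>' S0 = 0" "\<alpha> S0 \<noteq> 0" by metis+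
  show ?thesis
  proof (rule aff_dim_less_if_subset_affine)
    show "square_polytope \<alpha>' \<subseteq> square_polytope \<alpha> \<inter> {c. K_of_squares S0 c = 0}"
      using zero_or_same \<open>\<alpha>' S0 = 0\<close> unfolding square_polytope_def by fastforce
    show "sq_coords b \<in> square_polytope \<alpha>"
      using b Mset_subset_Valpha Valpha_iff_sq_coords by blast
    show "sq_coords b \<notin> {c. K_of_squares S0 c = 0}"
    proof
      have "sgn (K S0 b) = of_int (\<alpha> S0)" using b by (simp add: Mset_def)
      moreover assume "sq_coords b \<in> {c. K_of_squares S0 c = 0}"
      ultimately show False using \<open>\<alpha> S0 \<noteq> 0\<close> by (simp add: K_eq_K_of_squares)
    qed
  qed (rule affine_K_of_squares_zero)
qed

theorem proposition5p1:
  fixes \<alpha> \<alpha>' :: "'n::finite set \<Rightarrow> int"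
  assumes "\<forall>S. \<alpha> S \<in> {-1, 0, 1}" and "\<forall>S. \<alpha>' S \<in> {-1, 0, 1}"
    and "Mset \<alpha> \<noteq> {}" and "Mset \<alpha>' \<noteq> {}"
    and "\<exists>x :: nat \<Rightarrow> real^'n. \<exists>p. (\<forall>k. x k \<in> Mset \<alpha>) \<and> x \<longlonglongrightarrow> p \<and> p \<in> Mset \<alpha>'"
  shows "\<alpha> = \<alpha>' \<or> dimM \<alpha>' < dimM \<alpha>"
proof (cases "\<alpha> = \<alpha>'")
  case False
  obtain x :: "nat \<Rightarrow> real^'n" and p where "\<And>k. x k \<in> Mset \<alpha>" "x \<longlonglongrightarrow> p" "p \<in> Mset \<alpha>'"
    using assms(5) by blast
  then have "\<And>S. \<alpha>' S = 0 \<or> \<alpha>' S = \<alpha> S" by (rule Mset_limit_zero_or_same)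
  moreover obtain b where "b \<in> Mset \<alpha>" using assms(3) by blast
  ultimately have "aff_dim (square_polytope \<alpha>') < aff_dim (square_polytope \<alpha>)"
    using False by (rule aff_dim_square_polytope_less)
  moreover have "Valpha \<alpha> \<noteq> {}" "Valpha \<alpha>' \<noteq> {}"
    using assms(3,4) Mset_subset_Valpha by blast+
  ultimately show ?thesis by (simp flip: dimM_eq_aff_dim_square_polytope)
qed simp

end
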